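(* A Toeplitz graph is regular if and only if it is a circulant graph. More precisely, for a Toeplitz graph $G=G_n\langle t_1,\ldots,t_k\rangle$: if $G$ is regular then its adjacency matrix (vertices ordered $1,\ldots,n$) is a circulant matrix; and if $G$ is isomorphic to a circulant graph then $G$ is regular.
   Context: For integers $n\ge 2$, $k\ge 1$ and $1\le t_1<t_2<\cdots<t_k\le n-1$, the Toeplitz graph $G_n\langle t_1,\ldots,t_k\rangle$ is the simple graph with vertex set $[n]=\{1,\ldots,n\}$ in which two distinct vertices $i,j$ are adjacent if and only if $|i-j|\in\{t_1,\ldots,t_k\}$. An $n\times n$ matrix $(a_{ij})$ is circulant if $a_{ij}$ depends only on $(i-j)\bmod n$. A circulant graph is a graph isomorphic to a graph whose adjacency matrix is a symmetric $(0,1)$ circulant matrix with zero diagonal. A graph is regular if all vertices have the same degree. *)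

theory Defs
  imports Main
begin

text \<open>Simple graphs are represented by a vertex set V and an adjacency
relation E (assumed symmetric and irreflexive where relevant).\<close>

definition toeplitz_adj :: "nat \<Rightarrow> nat set \<Rightarrow> nat \<Rightarrow> nat \<Rightarrow> bool" where
  "toeplitz_adj n T i j \<longleftrightarrow>
     i \<in> {1..n} \<and> j \<in> {1..n} \<and> i \<noteq> j \<and> nat \<bar>int i - int j\<bar> \<in> T"

definition regular_graph :: "'a set \<Rightarrow> ('a \<Rightarrow> 'a \<Rightarrow> bool) \<Rightarrow> bool" where
  "regular_graph V E \<longleftrightarrow> (\<exists>d. \<forall>v\<in>V. card {u\<in>V. E v u} = d)"

definition circulant_matrix :: "nat \<Rightarrow> (nat \<Rightarrow> nat \<Rightarrow> 'b) \<Rightarrow> bool" where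
  "circulant_matrix n A \<longleftrightarrow>
     (\<forall>i\<in>{1..n}. \<forall>j\<in>{1..n}. \<forall>i'\<in>{1..n}. \<forall>j'\<in>{1..n}.
        (int i - int j) mod int n = (int i' - int j') mod int n \<longrightarrow> A i j = A i' j')"

definition adj_matrix :: "(nat \<Rightarrow> nat \<Rightarrow> bool) \<Rightarrow> nat \<Rightarrow> nat \<Rightarrow> int" where
  "adj_matrix E i j = (if E i j then 1 else 0)"

definition circulant_graph :: "'a set \<Rightarrow> ('a \<Rightarrow> 'a \<Rightarrow> bool) \<Rightarrow> bool" where
  "circulant_graph V E \<longleftrightarrow>
     (\<exists>m f (M :: nat \<Rightarrow> nat \<Rightarrow> int).
        bij_betw f V {1..m} \<and>
        (\<forall>i\<in>{1..m}. \<forall>j\<in>{1..m}. M i j \<in> {0, 1} \<and> M i j = M j i) \<and>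
        (\<forall>i\<in>{1..m}. M i i = 0) \<and>
        circulant_matrix m M \<and>
        (\<forall>u\<in>V. \<forall>v\<in>V. E u v \<longleftrightarrow> M (f u) (f v) = 1))"

end

theory Submission
  imports Defs
begin

text \<open>Vertex \<open>i\<close> of \<open>G\<^sub>n\<langle>T\<rangle>\<close> has the neighbours \<open>i + t\<close> with \<open>t \<le> n - i\<close> and
\<open>i - t\<close> with \<open>t \<le> i - 1\<close>, so with \<open>L s = #{t \<in> T. t \<le> s}\<close> its degree is
\<open>L (n - i) + L (i - 1)\<close>. Comparing the degrees of \<open>i\<close> and \<open>i + 1\<close> in a regular
Toeplitz graph shows \<open>t \<in> T \<longleftrightarrow> n - t \<in> T\<close>; for such \<open>T\<close> adjacency of \<open>i, j\<close> is
just \<open>(i - j) mod n \<in> T\<close>, which is the circulant condition. Conversely every row of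
a circulant matrix is a cyclic shift of every other row, so all vertices of a
circulant graph have the same degree.\<close>

lemma card_toeplitz_neighbours:
  assumes T: "T \<subseteq> {1..n-1}" and i: "i \<in> {1..n}"
  shows "card {j\<in>{1..n}. toeplitz_adj n T i j} =
         card {t\<in>T. t \<le> n - i} + card {t\<in>T. t \<le> i - 1}"
proof -
  have "finite T" using T finite_subset by blast
  have neighbours: "{j\<in>{1..n}. toeplitz_adj n T i j} =
        (\<lambda>t. i + t) ` {t\<in>T. t \<le> n - i} \<union> (\<lambda>t. i - t) ` {t\<in>T. t \<le> i - 1}"
  proof (intro set_eqI iffI)
    fix j assume "j \<in> {j\<in>{1..n}. toeplitz_adj n T i j}"
    then have j: "j \<in> {1..n}" "j \<noteq> i" "nat \<bar>int i - int j\<bar> \<in> T"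
      by (auto simp: toeplitz_adj_def)
    show "j \<in> (\<lambda>t. i + t) ` {t\<in>T. t \<le> n - i} \<union> (\<lambda>t. i - t) ` {t\<in>T. t \<le> i - 1}"
    proof (cases "i < j")
      case True
      then have "j = i + (j - i)" "j - i \<in> T" using j by (auto simp: nat_diff_distrib')
      then show ?thesis using j by force
    next
      case False
      then have "j = i - (i - j)" "i - j \<in> T" "j < i" using j by (auto simp: nat_diff_distrib')
      then show ?thesis using j by force
    qed
  next
    fix j assume "j \<in> (\<lambda>t. i + t) ` {t\<in>T. t \<le> n - i} \<union> (\<lambda>t. i - t) ` {t\<in>T. t \<le> i - 1}"
    then show "j \<in> {j\<in>{1..n}. toeplitz_adj n T i j}"
      using T i by (force simp: toeplitz_adj_def)
  qed
  have "card {j\<in>{1..n}. toeplitz_adj n T i j} =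
        card ((\<lambda>t. i + t) ` {t\<in>T. t \<le> n - i}) + card ((\<lambda>t. i - t) ` {t\<in>T. t \<le> i - 1})"
    unfolding neighbours using \<open>finite T\<close> T i by (intro card_Un_disjoint) force+
  also have "\<dots> = card {t\<in>T. t \<le> n - i} + card {t\<in>T. t \<le> i - 1}"
    by (subst (1 2) card_image) (auto simp: inj_on_def)
  finally show ?thesis .
qed

lemma card_le_Suc:
  fixes T :: "nat set"
  assumes "finite T"
  shows "card {t\<in>T. t \<le> Suc s} = card {t\<in>T. t \<le> s} + (if Suc s \<in> T then 1 else 0)"
proof -
  have "{t\<in>T. t \<le> Suc s} = {t\<in>T. t \<le> s} \<union> ({Suc s} \<inter> T)" by auto
  then show ?thesis using assms by auto
qed

lemma regular_toeplitz_symmetric: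
  assumes T: "T \<subseteq> {1..n-1}" and reg: "regular_graph {1..n} (toeplitz_adj n T)"
    and t: "t \<in> {1..n-1}"
  shows "t \<in> T \<longleftrightarrow> n - t \<in> T"
proof -
  define L where "L s = card {u\<in>T. u \<le> s}" for s
  have L_Suc: "L (Suc s) = L s + (if Suc s \<in> T then 1 else 0)" for s
    unfolding L_def using T finite_subset by (intro card_le_Suc) blast
  obtain d where "\<forall>v\<in>{1..n}. card {j\<in>{1..n}. toeplitz_adj n T v j} = d"
    using reg unfolding regular_graph_def by blast
  moreover have "t \<in> {1..n}" "Suc t \<in> {1..n}" using t by auto
  ultimately have "L (n - t) + L (t - 1) = L (n - Suc t) + L t"
    using card_toeplitz_neighbours[OF T, of t] card_toeplitz_neighbours[OF T, of "Suc t"]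
    unfolding L_def by simp
  moreover have "n - t = Suc (n - Suc t)" "t = Suc (t - 1)" using t by auto
  ultimately have "L (n - Suc t) + (if n - t \<in> T then 1 else 0) + L (t - 1) =
                   L (n - Suc t) + (L (t - 1) + (if t \<in> T then 1 else 0))"
    by (metis L_Suc)
  then show ?thesis by (simp split: if_splits)
qed

lemma toeplitz_adj_iff_mod:
  assumes T: "T \<subseteq> {1..n-1}" and symmetric: "\<forall>t\<in>{1..n-1}. t \<in> T \<longleftrightarrow> n - t \<in> T"
    and i: "i \<in> {1..n}" and j: "j \<in> {1..n}"
  shows "toeplitz_adj n T i j \<longleftrightarrow> nat ((int i - int j) mod int n) \<in> T"
proof -
  consider "i = j" | "j < i" | "i < j" by linarith
  then show ?thesis
  proof cases
    case 1
    then show ?thesis using T by (auto simp: toeplitz_adj_def)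
  next
    case 2
    then have "(int i - int j) mod int n = int i - int j"
      using i j by (intro mod_pos_pos_trivial) auto
    then show ?thesis using 2 i j by (simp add: toeplitz_adj_def)
  next
    case 3
    have "(int i - int j) mod int n = (int i - int j + int n) mod int n" by simp
    also have "\<dots> = int (n - (j - i))"
      using 3 i j by (subst mod_pos_pos_trivial) auto
    finally have "nat ((int i - int j) mod int n) = n - (j - i)" by simp
    moreover have "j - i \<in> {1..n-1}" "nat \<bar>int i - int j\<bar> = j - i" using 3 i j by auto
    ultimately show ?thesis using 3 i j symmetric by (simp add: toeplitz_adj_def)
  qed
qed

lemma circulant_adj_matrix_toeplitz:
  assumes T: "T \<subseteq> {1..n-1}" and symmetric: "\<forall>t\<in>{1..n-1}. t \<in> T \<longleftrightarrow> n - t \<in> T"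
  shows "circulant_matrix n (adj_matrix (toeplitz_adj n T))"
  unfolding circulant_matrix_def adj_matrix_def
  using toeplitz_adj_iff_mod[OF T symmetric] by simp

lemma eq_if_dvd_diff_interval:
  assumes a: "a \<in> {1..m}" and b: "b \<in> {1..m}" and "int m dvd int a - int b"
  shows "a = b"
proof (rule ccontr)
  assume "a \<noteq> b"
  with assms(3) have "int m \<le> \<bar>int a - int b\<bar>"
    by (intro dvd_imp_le_int[of _ "int m", simplified]) auto
  then show False using a b by auto
qed

text \<open>Each row of a circulant matrix is the first column read cyclically.\<close>

lemma card_row_circulant:
  fixes M :: "nat \<Rightarrow> nat \<Rightarrow> 'b"
  assumes circulant: "circulant_matrix m M" and i: "i \<in> {1..m}"
  shows "card {j\<in>{1..m}. P (M i j)} = card {r\<in>{0..<m}. P (M (r + 1) 1)}"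
proof -
  define \<phi> where "\<phi> j = nat ((int i - int j) mod int m)" for j
  have "m \<ge> 1" using i by auto
  have \<phi>_less: "\<phi> j < m" for j
    unfolding \<phi>_def using \<open>m \<ge> 1\<close> by (simp add: nat_less_iff)
  have "inj_on \<phi> {1..m}"
  proof (rule inj_onI)
    fix a b assume a: "a \<in> {1..m}" and b: "b \<in> {1..m}" and "\<phi> a = \<phi> b"
    then have "(int i - int a) mod int m = (int i - int b) mod int m"
      using \<open>m \<ge> 1\<close> by (simp add: \<phi>_def eq_nat_nat_iff)
    then have "int m dvd int b - int a" by (simp add: mod_eq_dvd_iff)
    then show "a = b" using eq_if_dvd_diff_interval[OF b a] by simp
  qed
  moreover have "\<phi> ` {1..m} \<subseteq> {0..<m}" using \<phi>_less by auto
  ultimately have \<phi>_bij: "bij_betw \<phi> {1..m} {0..<m}"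
    by (simp add: bij_betw_def card_image card_subset_eq)
  have M_row: "M i j = M (\<phi> j + 1) 1" if j: "j \<in> {1..m}" for j
  proof -
    have "(int (\<phi> j + 1) - int 1) mod int m = (int i - int j) mod int m"
      using \<open>m \<ge> 1\<close> by (simp add: \<phi>_def)
    moreover have "\<phi> j + 1 \<in> {1..m}" "1 \<in> {1..m}" using \<phi>_less[of j] \<open>m \<ge> 1\<close> by auto
    ultimately show ?thesis
      using circulant i j unfolding circulant_matrix_def by metis
  qed
  have "bij_betw \<phi> {j\<in>{1..m}. P (M i j)} {r\<in>{0..<m}. P (M (r + 1) 1)}"
    using \<phi>_bij M_row by (intro bij_betw_Collect) simp_all
  then show ?thesis by (rule bij_betw_same_card)
qed

lemma regular_if_circulant_graph:
  assumes "circulant_graph V E"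
  shows "regular_graph V E"
proof -
  obtain m f and M :: "nat \<Rightarrow> nat \<Rightarrow> int" where f: "bij_betw f V {1..m}"
    and circulant: "circulant_matrix m M"
    and E: "\<forall>u\<in>V. \<forall>v\<in>V. E u v \<longleftrightarrow> M (f u) (f v) = 1"
    using assms unfolding circulant_graph_def by blast
  have "card {u\<in>V. E v u} = card {r\<in>{0..<m}. M (r + 1) 1 = 1}" if v: "v \<in> V" for v
  proof -
    have "bij_betw f {u\<in>V. E v u} {j\<in>{1..m}. M (f v) j = 1}"
      using f E v by (intro bij_betw_Collect) auto
    then have "card {u\<in>V. E v u} = card {j\<in>{1..m}. M (f v) j = 1}"
      by (rule bij_betw_same_card)
    also have "\<dots> = card {r\<in>{0..<m}. M (r + 1) 1 = 1}"
      using circulant f v by (intro card_row_circulant) (auto dest: bij_betwE)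
    finally show ?thesis .
  qed
  then show ?thesis unfolding regular_graph_def by blast
qed

theorem theorem4p6:
  fixes n :: nat and T :: "nat set"
  assumes "n \<ge> 2" and "T \<noteq> {}" and "T \<subseteq> {1..n-1}"
  shows "(regular_graph {1..n} (toeplitz_adj n T) \<longrightarrow>
            circulant_matrix n (adj_matrix (toeplitz_adj n T))) \<and>
         (circulant_graph {1..n} (toeplitz_adj n T) \<longrightarrow>
            regular_graph {1..n} (toeplitz_adj n T))"
proof (intro conjI impI)
  assume "regular_graph {1..n} (toeplitz_adj n T)"
  then show "circulant_matrix n (adj_matrix (toeplitz_adj n T))"
    using assms(3) by (simp add: circulant_adj_matrix_toeplitz regular_toeplitz_symmetric)
qed (rule regular_if_circulant_graph)

end
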